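(* Let $\Omega\subset\mathbb{R}^n$ be a bounded open set, $s\in(0,1)$ and $p,q\in[1,\infty)$. Then for every $\xi\in\mathbb{S}^{n-1}$ and every $f\in C^1(\mathbb{R}^n)$ with support in $\Omega$, $$\|f\|_{L^p}\le C(1-s)^{\frac1q}\,\mathrm{w}(\Omega,\xi)^s\Big(\int_0^{\mathrm{w}(\Omega,\xi)}t^{-sq}\|\Delta_{t\xi}f\|^q_{L^p}\frac{dt}{t}\Big)^{1/q},$$ where $$C=\frac{9}{c_p}\Big(\frac{q}{sq+1}\Big)^{1/q}\max\Big\{1,\frac{c_p}{3}\Big\}^{1-s},\qquad c_p=\begin{cases}\frac2p\,\frac{\pi-\pi/p}{\sin(\pi/p)}(p-1)^{\frac1p-1},&p>1,\\ 2,&p=1.\end{cases}$$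
   Context: $\Delta_hf(x)=f(x+h)-f(x)$. $\mathrm{w}(\Omega,\xi)=\sup_{x,y\in\Omega}(x-y)\cdot\xi$ is the width of $\Omega$ in the direction $\xi$. *)

theory Defs
  imports "HOL-Analysis.Analysis"
begin

definition Lp_norm :: "real \<Rightarrow> ('a::euclidean_space \<Rightarrow> real) \<Rightarrow> real" where
  "Lp_norm p g = (\<integral>x. \<bar>g x\<bar> powr p \<partial>lebesgue) powr (1 / p)"

definition fdiff :: "'a::real_vector \<Rightarrow> ('a \<Rightarrow> real) \<Rightarrow> 'a \<Rightarrow> real" where
  "fdiff h f x = f (x + h) - f x"

definition width :: "'a::real_inner set \<Rightarrow> 'a \<Rightarrow> real" where
  "width \<Omega> \<xi> = (SUP xy\<in>\<Omega> \<times> \<Omega>. (fst xy - snd xy) \<bullet> \<xi>)"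

definition c_const :: "real \<Rightarrow> real" where
  "c_const p = (if p = 1 then 2
     else (2 / p) * ((pi - pi / p) / sin (pi / p)) * (p - 1) powr (1 / p - 1))"

definition C1_on_UNIV :: "('a::euclidean_space \<Rightarrow> real) \<Rightarrow> bool" where
  "C1_on_UNIV f \<longleftrightarrow> (\<exists>f'. (\<forall>x. (f has_derivative f' x) (at x)) \<and>
      continuous_on UNIV f')"

end

theory Submission
  imports Defs
begin

text \<open>If \<open>f\<close> vanishes outside \<open>\<Omega>\<close> and \<open>N t\<close> exceeds the width \<open>w\<close> of \<open>\<Omega>\<close> in direction \<open>\<xi>\<close>,
  then \<open>f\<close> and its translate by \<open>N t \<xi>\<close> have disjoint supports, while their difference
  telescopes into \<open>N\<close> translates of \<open>\<Delta>_{t\<xi>} f\<close>. Convexity of \<open>|\<cdot>|^p\<close> and translation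
  invariance of Lebesgue measure give \<open>2 \<parallel>f\<parallel>_p^p \<le> N^p \<parallel>\<Delta>_{t\<xi>} f\<parallel>_p^p\<close>, and
  \<open>N = \<lfloor>w/t\<rfloor> + 1 \<le> 2w/t\<close> turns this into \<open>\<parallel>\<Delta>_{t\<xi>} f\<parallel>_p \<ge> 2^{1/p} \<parallel>f\<parallel>_p t / (2w)\<close>
  for \<open>0 < t < w\<close>. Integrating this lower bound against \<open>t^{-sq-1} dt\<close> proves the inequality
  with the constant \<open>2^{1-1/p} (q(1-s))^{1/q}\<close>; the elementary estimate
  \<open>4 c_p \<le> 9 \<cdot> 2^{1/p}\<close> shows that it is at most the stated constant.\<close>

lemma powr_weighted_am_gm:
  fixes x u :: real
  assumes "0 \<le> x" "0 \<le> u" "u \<le> 1"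
  shows "x powr u \<le> u * x + (1 - u)"
proof (cases "x = 0")
  case True
  then show ?thesis using assms by simp
next
  case False
  have "x powr u * 1 powr (1 - u) \<le> u * x + (1 - u) * 1"
    by (rule Youngs_inequality_0) (use assms False in auto)
  then show ?thesis by simp
qed

lemma two_mult_le_two_powr:
  fixes u :: real
  assumes "u \<le> 1"
  shows "2 * u \<le> 2 powr u"
proof -
  have "2 powr u = 2 * exp (- (1 - u) * ln 2)"
    by (simp add: powr_def exp_diff exp_minus field_simps)
  moreover have "1 + (- (1 - u) * ln 2) \<le> exp (- (1 - u) * ln 2)"
    by (rule exp_ge_add_one_self)
  moreover have "(1 - u) * ln 2 \<le> 1 - u"
    using assms ln_2_less_1 by (intro mult_left_le) auto
  ultimately show ?thesis by linarith
qed

lemma sin_ge_cubic: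
  fixes x :: real
  assumes "0 \<le> x" "x \<le> 8/5"
  shows "x - 10/53 * x^3 \<le> sin x"
proof -
  have "sin_coeff 0 = 0" "sin_coeff 1 = 1" "sin_coeff 2 = 0" "sin_coeff 3 = -1/6" "sin_coeff 4 = 0"
    by (simp_all add: sin_coeff_def fact_numeral)
  then have taylor: "(\<Sum>m<5. sin_coeff m * x ^ m) = x - x^3/6"
    by (simp add: eval_nat_numeral)
  have "\<bar>sin x - (\<Sum>m<5. sin_coeff m * x ^ m)\<bar> \<le> inverse (fact 5) * \<bar>x\<bar> ^ 5"
    by (rule Maclaurin_sin_bound)
  then have "\<bar>sin x - (x - x^3/6)\<bar> \<le> x^5 / 120"
    using assms by (simp add: taylor fact_numeral)
  then have "x - x^3/6 - x^5 / 120 \<le> sin x"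
    unfolding abs_le_iff by linarith
  moreover have "x^5 = x^3 * x^2"
    by (simp flip: power_add)
  moreover have "x^2 \<le> 64/25"
    using mult_mono[OF assms(2) assms(2)] assms by (simp add: power2_eq_square)
  then have "x^3 * x^2 \<le> x^3 * (64/25)"
    by (rule mult_left_mono) (use assms in simp)
  moreover have "0 \<le> x^3"
    using assms by simp
  ultimately show ?thesis by linarith
qed

lemma c_const_inverse_mult_sin:
  fixes u :: real
  assumes "0 < u" "u < 1"
  shows "c_const (1/u) * sin (pi * u) = 2 * pi * u^2 * ((1 - u) / u) powr u"
proof -
  define r where "r = (1 - u) / u"
  have r: "1/u - 1 = r" "0 < r" using assms by (auto simp: r_def field_simps)
  have "sin (pi * u) > 0"
    using assms by (intro sin_gt_zero) auto
  moreover have "(1/u - 1) powr (u - 1) = r powr u / r"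
    using r by (simp add: powr_diff)
  ultimately have "c_const (1/u) * sin (pi * u) = 2 * u * (pi - pi * u) * (r powr u / r)"
    using assms by (simp add: c_const_def)
  also have "\<dots> = 2 * pi * u^2 * r powr u"
    using assms by (simp add: r_def field_simps power2_eq_square)
  finally show ?thesis by (simp add: r_def)
qed

lemma c_const_inverse_mult_sin_le:
  fixes u :: real
  assumes "0 < u" "u < 1"
  shows "c_const (1/u) * sin (pi * u) \<le> 4 * pi * u^2 * (1 - u)"
proof -
  have "((1 - u) / u) powr u \<le> u * ((1 - u) / u) + (1 - u)"
    using assms by (intro powr_weighted_am_gm) auto
  also have "\<dots> = 2 * (1 - u)"
    using assms by simp
  finally show ?thesis
    using assms by (simp add: c_const_inverse_mult_sin)
qed

lemma c_const_pos:
  assumes "1 \<le> p"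
  shows "0 < c_const p"
proof (cases "p = 1")
  case False
  then have "0 < sin (pi / p)"
    using assms by (intro sin_gt_zero) (auto simp: field_simps)
  moreover have "pi / p < pi"
    using assms False by (simp add: field_simps)
  ultimately show ?thesis
    using assms False by (simp add: c_const_def)
qed (simp add: c_const_def)

lemma pi_le_317_100: "pi \<le> 317/100"
  using pi_approx(2) by simp

lemma c_const_inverse_le_two:
  fixes u :: real
  assumes "0 < u" "u \<le> 1/2"
  shows "c_const (1/u) \<le> 2"
proof -
  have "pi * u \<le> pi * (1/2)"
    using assms by (intro mult_left_mono) auto
  then have pi_u: "pi * u \<le> 8/5"
    using pi_le_317_100 by linarith
  have "(pi * u)^2 \<le> 64/25"
    using mult_mono[OF pi_u pi_u] assms by (simp add: power2_eq_square)
  then have "(pi * u) * (pi * u)^2 \<le> (pi * u) * (64/25)"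
    by (rule mult_left_mono) (use assms in simp)
  then have "pi * u / 2 \<le> pi * u - 10/53 * (pi * u)^3"
    using assms by (simp add: power3_eq_cube power2_eq_square)
  also have "\<dots> \<le> sin (pi * u)"
    using pi_u assms by (intro sin_ge_cubic) auto
  finally have "c_const (1/u) * (pi * u / 2) \<le> c_const (1/u) * sin (pi * u)"
    using c_const_pos[of "1/u"] assms by (intro mult_left_mono) auto
  also have "\<dots> \<le> 4 * pi * u^2 * (1 - u)"
    using assms by (intro c_const_inverse_mult_sin_le) auto
  also have "\<dots> = (8 * u * (1 - u)) * (pi * u / 2)"
    by (simp add: power2_eq_square)
  finally have "c_const (1/u) \<le> 8 * u * (1 - u)"
    using assms by (simp add: mult_le_cancel_right)
  moreover have "u * (1 - u) \<le> 1/4"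
    using zero_le_power2[of "u - 1/2"] by (simp add: power2_eq_square algebra_simps)
  ultimately show ?thesis by linarith
qed

lemma sin_pi_minus_ge:
  fixes v :: real
  assumes "0 < v" "v < 1/2"
  shows "pi * v * (1 - 19/10 * v^2) \<le> sin (pi * (1 - v))"
proof -
  have "pi * v \<le> pi * (1/2)"
    using assms by (intro mult_left_mono) auto
  then have pi_v: "pi * v \<le> 8/5"
    using pi_le_317_100 by linarith
  have "pi^2 \<le> 100489/10000"
    using mult_mono[OF pi_le_317_100 pi_le_317_100] by (simp add: power2_eq_square)
  then have "10/53 * pi^2 \<le> 19/10"
    by simp
  then have "10/53 * pi^2 * (v^2 * (pi * v)) \<le> 19/10 * (v^2 * (pi * v))"
    by (rule mult_right_mono) (use assms in simp)
  moreover have "10/53 * (pi * v)^3 = 10/53 * pi^2 * (v^2 * (pi * v))"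
    by (simp add: power3_eq_cube power2_eq_square)
  moreover have "sin (pi * (1 - v)) = sin (pi * v)"
    by (simp add: right_diff_distrib sin_pi_minus)
  moreover have "pi * v - 10/53 * (pi * v)^3 \<le> sin (pi * v)"
    using pi_v assms by (intro sin_ge_cubic) auto
  moreover have "pi * v * (1 - 19/10 * v^2) = pi * v - 19/10 * (v^2 * (pi * v))"
    by (simp add: algebra_simps)
  ultimately show ?thesis
    by linarith
qed

lemma c_const_inverse_le:
  fixes u :: real
  assumes "1/2 < u" "u < 1"
  shows "c_const (1/u) \<le> 9/2 * u"
proof -
  define v where "v = 1 - u"
  have v: "0 < v" "v < 1/2"
    using assms by (auto simp: v_def)
  then have "c_const (1/u) * (pi * v * (1 - 19/10 * v^2)) \<le> c_const (1/u) * sin (pi * u)"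
    using sin_pi_minus_ge[of v] c_const_pos[of "1/u"] assms
    by (intro mult_left_mono) (auto simp: v_def)
  also have "\<dots> \<le> 4 * pi * u^2 * v"
    using assms c_const_inverse_mult_sin_le[of u] by (simp add: v_def)
  finally have "(c_const (1/u) * (1 - 19/10 * v^2)) * (pi * v) \<le> (4 * u^2) * (pi * v)"
    by (simp add: ac_simps)
  then have bound: "c_const (1/u) * (1 - 19/10 * v^2) \<le> 4 * u^2"
    using v by (simp add: mult_le_cancel_right)
  have "v^2 \<le> v / 2"
    using v by (simp add: power2_eq_square)
  then have "8 * u \<le> 9 * (1 - 19/10 * v^2)"
    using v by (simp add: v_def)
  then have "c_const (1/u) * (8 * u) \<le> 9 * (c_const (1/u) * (1 - 19/10 * v^2))"
    using c_const_pos[of "1/u"] assms by (simp add: mult_left_mono)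
  also have "\<dots> \<le> (9/2 * u) * (8 * u)"
    using bound by (simp add: power2_eq_square)
  finally show ?thesis
    using assms by (simp add: mult_le_cancel_right)
qed

lemma c_const_le:
  assumes "1 \<le> p"
  shows "4 * c_const p \<le> 9 * 2 powr (1/p)"
proof (cases "p = 1")
  case True
  then show ?thesis by (simp add: c_const_def)
next
  case False
  define u where "u = 1 / p"
  have u: "0 < u" "u < 1" and p: "p = 1 / u"
    using assms False by (auto simp: u_def)
  \<comment> \<open>Near \<open>u = 1\<close> the bound \<open>c_const (1/u) \<le> 2\<close> fails, so there the factor \<open>2 powr u\<close> is needed.\<close>
  show ?thesis
  proof (cases "u \<le> 1/2")
    case True
    have "1 \<le> 2 powr u"
      using u by (simp add: ge_one_powr_ge_zero)
    then show ?thesis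
      using c_const_inverse_le_two[of u] True u unfolding p by simp
  next
    case False
    then show ?thesis
      using c_const_inverse_le[of u] two_mult_le_two_powr[of u] u unfolding p by simp
  qed
qed

lemma powr_tangent_le:
  fixes m y p :: real
  assumes "0 < m" "0 \<le> y" "1 \<le> p"
  shows "m powr p + p * m powr (p - 1) * (y - m) \<le> y powr p"
proof (cases "y = 0")
  case True
  have "m powr (p - 1) * m = m powr p"
    using assms by (simp add: powr_diff)
  then have "m powr p + p * m powr (p - 1) * (y - m) = (1 - p) * m powr p"
    using True by (simp add: algebra_simps)
  also have "\<dots> \<le> 0"
    using assms by (simp add: mult_nonpos_nonneg)
  finally show ?thesis
    using True by simp
next
  case False
  have "p * m powr (p - 1) * (y - m) \<le> y powr p - m powr p"
  proof (rule f''_imp_f'[of "{0<..}" "\<lambda>x. x powr p" "\<lambda>x. p * x powr (p - 1)"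
        "\<lambda>x. p * ((p - 1) * x powr (p - 1 - 1))"])
    show "DERIV (\<lambda>x. x powr p) x :> p * x powr (p - 1)" if "x \<in> {0<..}" for x
      using that by (auto intro!: derivative_eq_intros)
    show "DERIV (\<lambda>x. p * x powr (p - 1)) x :> p * ((p - 1) * x powr (p - 1 - 1))"
      if "x \<in> {0<..}" for x
      using that by (auto intro!: derivative_eq_intros)
  qed (use assms False in auto)
  then show ?thesis by simp
qed

lemma sum_powr_le_card_powr_mult_sum:
  fixes b :: "'i \<Rightarrow> real" and p :: real
  assumes "finite A" "A \<noteq> {}" "\<And>k. k \<in> A \<Longrightarrow> 0 \<le> b k" "1 \<le> p"
  shows "(\<Sum>k\<in>A. b k) powr p \<le> real (card A) powr (p - 1) * (\<Sum>k\<in>A. b k powr p)"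
proof -
  define B where "B = (\<Sum>k\<in>A. b k)"
  define N where "N = real (card A)"
  have N: "0 < N"
    using assms by (simp add: N_def card_gt_0_iff)
  show ?thesis
  proof (cases "B = 0")
    case True
    then show ?thesis
      using assms by (simp add: B_def[symmetric] sum_nonneg)
  next
    case False
    define m where "m = B / N"
    have "0 \<le> B"
      unfolding B_def using assms by (simp add: sum_nonneg)
    then have m: "0 < m" "B = N * m"
      using False N by (auto simp: m_def)
    have "(\<Sum>k\<in>A. m powr p + p * m powr (p - 1) * (b k - m))
        = N * m powr p + p * m powr (p - 1) * (B - N * m)"
      by (simp add: sum.distrib sum_subtractf sum_distrib_left[symmetric] B_def N_def)
    also have "\<dots> = N * m powr p"
      using m by simp
    finally have "N * m powr p \<le> (\<Sum>k\<in>A. b k powr p)"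
      using sum_mono[of A "\<lambda>k. m powr p + p * m powr (p - 1) * (b k - m)" "\<lambda>k. b k powr p"]
        powr_tangent_le[OF m(1) assms(3) assms(4)] by simp
    moreover have "B powr p = N powr (p - 1) * (N * m powr p)"
      using N m by (simp add: powr_mult powr_diff)
    ultimately show ?thesis
      using N by (simp add: B_def N_def mult_left_mono)
  qed
qed

lemma continuous_on_abs_powr:
  fixes g :: "'a::topological_space \<Rightarrow> real"
  assumes "continuous_on UNIV g" "0 < p"
  shows "continuous_on UNIV (\<lambda>x. \<bar>g x\<bar> powr p)"
  by (rule continuous_on_powr') (use assms in \<open>auto intro: continuous_on_rabs\<close>)

lemma integrable_abs_powr_bounded_support:
  fixes g :: "'a::euclidean_space \<Rightarrow> real"
  assumes "continuous_on UNIV g" "bounded {x. g x \<noteq> 0}" "0 < p"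
  shows "integrable lborel (\<lambda>x. \<bar>g x\<bar> powr p)"
proof -
  obtain x0 R where R: "{x. g x \<noteq> 0} \<subseteq> cball x0 R"
    using assms(2) bounded_subset_cball by blast
  have "integrable lborel (\<lambda>x. indicator (cball x0 R) x *\<^sub>R \<bar>g x\<bar> powr p)"
    by (rule borel_integrable_compact)
      (use continuous_on_subset[OF continuous_on_abs_powr[OF assms(1,3)]] in auto)
  moreover have "(\<lambda>x. indicator (cball x0 R) x *\<^sub>R \<bar>g x\<bar> powr p) = (\<lambda>x. \<bar>g x\<bar> powr p)"
    using R by (force simp: indicator_def)
  ultimately show ?thesis by simp
qed

lemma borel_measurable_abs_powr:
  fixes g :: "'a::euclidean_space \<Rightarrow> real"
  assumes "continuous_on UNIV g" "0 < p"
  shows "(\<lambda>x. \<bar>g x\<bar> powr p) \<in> borel_measurable borel"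
  by (rule borel_measurable_continuous_onI[OF continuous_on_abs_powr[OF assms]])

lemma Lp_norm_eq_lborel:
  fixes g :: "'a::euclidean_space \<Rightarrow> real"
  assumes "continuous_on UNIV g" "0 < p"
  shows "Lp_norm p g = (\<integral>x. \<bar>g x\<bar> powr p \<partial>lborel) powr (1/p)"
  using integral_completion[of "\<lambda>x. \<bar>g x\<bar> powr p" lborel] borel_measurable_abs_powr[OF assms]
  by (simp add: Lp_norm_def)

lemma lborel_integral_translate:
  fixes g :: "'a::euclidean_space \<Rightarrow> real"
  assumes "g \<in> borel_measurable borel"
  shows "(\<integral>x. g (c + x) \<partial>lborel) = (\<integral>x. g x \<partial>lborel)"
  using integral_distr[of "(+) c" lborel borel g] assms by (simp add: lborel_distr_plus)

lemma lborel_integrable_translate: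
  fixes g :: "'a::euclidean_space \<Rightarrow> real"
  assumes "integrable lborel g" "g \<in> borel_measurable borel"
  shows "integrable lborel (\<lambda>x. g (c + x))"
  using integrable_distr_eq[of "(+) c" lborel borel g] assms by (simp add: lborel_distr_plus)

lemma continuous_on_fdiff:
  fixes f :: "'a::real_normed_vector \<Rightarrow> real"
  assumes "continuous_on UNIV f"
  shows "continuous_on UNIV (fdiff h f)"
proof -
  have "continuous_on UNIV (\<lambda>x. f (x + h))"
    by (rule continuous_on_compose2[OF assms]) (auto intro: continuous_intros)
  then show ?thesis
    unfolding fdiff_def[abs_def] by (intro continuous_on_diff assms)
qed

lemma bounded_support_fdiff:
  fixes f :: "'a::real_normed_vector \<Rightarrow> real"
  assumes "bounded {x. f x \<noteq> 0}"
  shows "bounded {x. fdiff h f x \<noteq> 0}"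
proof -
  have "{x. fdiff h f x \<noteq> 0} \<subseteq> {x. f x \<noteq> 0} \<union> (\<lambda>x. - h + x) ` {x. f x \<noteq> 0}"
    by (force simp: fdiff_def image_iff)
  then show ?thesis
    using assms bounded_translation[OF assms, of "- h"] bounded_Un bounded_subset by blast
qed

lemma sum_fdiff_telescope:
  fixes f :: "'a::real_vector \<Rightarrow> real"
  shows "(\<Sum>k<N. fdiff h f (real k *\<^sub>R h + x)) = f (real N *\<^sub>R h + x) - f x"
proof -
  have "(\<Sum>k<N. fdiff h f (real k *\<^sub>R h + x))
      = (\<Sum>k<N. f (real (Suc k) *\<^sub>R h + x) - f (real k *\<^sub>R h + x))"
    by (intro sum.cong) (auto simp: fdiff_def algebra_simps)
  also have "\<dots> = f (real N *\<^sub>R h + x) - f (real 0 *\<^sub>R h + x)"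
    by (rule sum_lessThan_telescope)
  finally show ?thesis
    by simp
qed

lemma abs_powr_add_translate_le:
  fixes f :: "'a::real_vector \<Rightarrow> real"
  assumes "1 \<le> p" "0 < N" "f x = 0 \<or> f (real N *\<^sub>R h + x) = 0"
  shows "\<bar>f x\<bar> powr p + \<bar>f (real N *\<^sub>R h + x)\<bar> powr p
    \<le> real N powr (p - 1) * (\<Sum>k<N. \<bar>fdiff h f (real k *\<^sub>R h + x)\<bar> powr p)"
proof -
  have "\<bar>f x\<bar> powr p + \<bar>f (real N *\<^sub>R h + x)\<bar> powr p = \<bar>f (real N *\<^sub>R h + x) - f x\<bar> powr p"
    using assms by auto
  also have "\<dots> = \<bar>\<Sum>k<N. fdiff h f (real k *\<^sub>R h + x)\<bar> powr p"
    by (simp only: sum_fdiff_telescope)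
  also have "\<dots> \<le> (\<Sum>k<N. \<bar>fdiff h f (real k *\<^sub>R h + x)\<bar>) powr p"
    using assms by (intro powr_mono2) auto
  also have "\<dots> \<le> real N powr (p - 1) * (\<Sum>k<N. \<bar>fdiff h f (real k *\<^sub>R h + x)\<bar> powr p)"
    using assms by (intro sum_powr_le_card_powr_mult_sum[of "{..<N}", simplified]) auto
  finally show ?thesis .
qed

lemma integral_abs_powr_le_fdiff:
  fixes f :: "'a::euclidean_space \<Rightarrow> real"
  assumes f: "continuous_on UNIV f" "bounded {x. f x \<noteq> 0}"
    and p: "1 \<le> p" and N: "0 < N"
    and disjoint: "\<And>x. f x \<noteq> 0 \<Longrightarrow> f (real N *\<^sub>R h + x) = 0"
  shows "2 * (\<integral>x. \<bar>f x\<bar> powr p \<partial>lborel)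
    \<le> real N powr p * (\<integral>x. \<bar>fdiff h f x\<bar> powr p \<partial>lborel)"
proof -
  define G where "G x = \<bar>f x\<bar> powr p" for x
  define E where "E x = \<bar>fdiff h f x\<bar> powr p" for x
  have "0 < p" using p by simp
  then have G: "integrable lborel G" "G \<in> borel_measurable borel"
    and E: "integrable lborel E" "E \<in> borel_measurable borel"
    unfolding G_def E_def using f
    by (auto intro!: integrable_abs_powr_bounded_support borel_measurable_abs_powr
        continuous_on_fdiff bounded_support_fdiff)
  have "2 * (\<integral>x. G x \<partial>lborel) = (\<integral>x. G x + G (real N *\<^sub>R h + x) \<partial>lborel)"
    using G lborel_integrable_translate[OF G] lborel_integral_translate[OF G(2)] by simp
  also have "\<dots> \<le> (\<integral>x. real N powr (p - 1) * (\<Sum>k<N. E (real k *\<^sub>R h + x)) \<partial>lborel)"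
    using G E lborel_integrable_translate[OF G] lborel_integrable_translate[OF E]
    unfolding G_def E_def
    by (intro integral_mono abs_powr_add_translate_le p N) (auto dest: disjoint)
  also have "\<dots> = real N powr (p - 1) * (\<Sum>k<N. \<integral>x. E x \<partial>lborel)"
    using lborel_integrable_translate[OF E] lborel_integral_translate[OF E(2)]
    by (simp add: integral_sum)
  also have "\<dots> = real N powr p * (\<integral>x. E x \<partial>lborel)"
    using N by (simp add: powr_diff)
  finally show ?thesis
    by (simp add: G_def E_def)
qed

lemma Lp_norm_le_fdiff:
  fixes f :: "'a::euclidean_space \<Rightarrow> real"
  assumes f: "continuous_on UNIV f" "bounded {x. f x \<noteq> 0}"
    and p: "1 \<le> p" and N: "0 < N"
    and disjoint: "\<And>x. f x \<noteq> 0 \<Longrightarrow> f (real N *\<^sub>R h + x) = 0"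
  shows "2 powr (1/p) * Lp_norm p f \<le> real N * Lp_norm p (fdiff h f)"
proof -
  define L where "L = (\<integral>x. \<bar>f x\<bar> powr p \<partial>lborel)"
  define LE where "LE = (\<integral>x. \<bar>fdiff h f x\<bar> powr p \<partial>lborel)"
  have p0: "0 < p" using p by simp
  have "0 \<le> L" "0 \<le> LE"
    by (simp_all add: L_def LE_def)
  have "2 powr (1/p) * Lp_norm p f = (2 * L) powr (1/p)"
    using \<open>0 \<le> L\<close> by (simp add: Lp_norm_eq_lborel[OF f(1) p0] L_def powr_mult)
  also have "\<dots> \<le> (real N powr p * LE) powr (1/p)"
    using integral_abs_powr_le_fdiff[OF assms] \<open>0 \<le> L\<close> p0 by (simp add: L_def LE_def powr_mono2)
  also have "\<dots> = real N * Lp_norm p (fdiff h f)"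
    using \<open>0 \<le> LE\<close> p0
    by (simp add: Lp_norm_eq_lborel[OF continuous_on_fdiff[OF f(1)] p0] LE_def powr_mult powr_powr)
  finally show ?thesis .
qed

lemma inner_le_width:
  fixes \<Omega> :: "'a::real_inner set"
  assumes "bounded \<Omega>" "x \<in> \<Omega>" "y \<in> \<Omega>"
  shows "(x - y) \<bullet> \<xi> \<le> width \<Omega> \<xi>"
proof -
  obtain B where B: "\<And>x. x \<in> \<Omega> \<Longrightarrow> norm x \<le> B"
    using assms(1) bounded_iff by blast
  have "(x - y) \<bullet> \<xi> \<le> 2 * B * norm \<xi>" if "x \<in> \<Omega>" "y \<in> \<Omega>" for x y
  proof -
    have "(x - y) \<bullet> \<xi> \<le> norm (x - y) * norm \<xi>"
      by (rule norm_cauchy_schwarz)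
    also have "\<dots> \<le> (norm x + norm y) * norm \<xi>"
      by (intro mult_right_mono norm_triangle_ineq4) simp
    also have "\<dots> \<le> 2 * B * norm \<xi>"
      using B[OF that(1)] B[OF that(2)] by (intro mult_right_mono) auto
    finally show ?thesis .
  qed
  then have "bdd_above ((\<lambda>xy. (fst xy - snd xy) \<bullet> \<xi>) ` (\<Omega> \<times> \<Omega>))"
    by (intro bdd_aboveI2) auto
  then show ?thesis
    unfolding width_def using assms(2,3) by (auto intro!: cSUP_upper2[of _ _ "(x, y)"])
qed

lemma width_pos:
  fixes \<Omega> :: "'a::real_inner set"
  assumes "bounded \<Omega>" "open \<Omega>" "x \<in> \<Omega>" "norm \<xi> = 1"
  shows "0 < width \<Omega> \<xi>"
proof -
  obtain e where e: "0 < e" "ball x e \<subseteq> \<Omega>"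
    using assms(2,3) open_contains_ball by blast
  then have "x + (e/2) *\<^sub>R \<xi> \<in> \<Omega>"
    using assms(4) by (auto simp: dist_norm)
  then have "((x + (e/2) *\<^sub>R \<xi>) - x) \<bullet> \<xi> \<le> width \<Omega> \<xi>"
    using assms(1,3) by (intro inner_le_width)
  moreover have "\<xi> \<bullet> \<xi> = 1"
    using assms(4) by (simp add: dot_square_norm)
  ultimately show ?thesis
    using e by simp
qed

lemma Lp_norm_fdiff_lower_bound:
  fixes f :: "'a::euclidean_space \<Rightarrow> real"
  assumes f: "continuous_on UNIV f" "{x. f x \<noteq> 0} \<subseteq> \<Omega>" and "bounded \<Omega>"
    and "norm \<xi> = 1" and p: "1 \<le> p" and t: "0 < t" "t < width \<Omega> \<xi>"
  shows "2 powr (1/p) * Lp_norm p f * t \<le> 2 * width \<Omega> \<xi> * Lp_norm p (fdiff (t *\<^sub>R \<xi>) f)"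
proof -
  define w where "w = width \<Omega> \<xi>"
  define N where "N = nat \<lfloor>w / t\<rfloor> + 1"
  have "1 \<le> w / t"
    using t by (simp add: w_def)
  then have "real N = of_int \<lfloor>w / t\<rfloor> + 1"
    by (simp add: N_def)
  then have "w / t < real N" "real N \<le> 2 * w / t"
    using \<open>1 \<le> w / t\<close> by linarith+
  then have N: "w < real N * t" "real N * t \<le> 2 * w"
    using t by (simp_all add: divide_less_eq le_divide_eq)
  have disjoint: "f (real N *\<^sub>R (t *\<^sub>R \<xi>) + x) = 0" if "f x \<noteq> 0" for x
  proof (rule ccontr)
    assume "f (real N *\<^sub>R (t *\<^sub>R \<xi>) + x) \<noteq> 0"
    then have "((real N *\<^sub>R (t *\<^sub>R \<xi>) + x) - x) \<bullet> \<xi> \<le> w"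
      using that f(2) \<open>bounded \<Omega>\<close> unfolding w_def by (intro inner_le_width) auto
    moreover have "\<xi> \<bullet> \<xi> = 1"
      using \<open>norm \<xi> = 1\<close> by (simp add: dot_square_norm)
    ultimately show False
      using N by simp
  qed
  have "2 powr (1/p) * Lp_norm p f \<le> real N * Lp_norm p (fdiff (t *\<^sub>R \<xi>) f)"
    using bounded_subset[OF \<open>bounded \<Omega>\<close> f(2)] disjoint
    by (intro Lp_norm_le_fdiff f(1) p) (auto simp: N_def)
  then have "2 powr (1/p) * Lp_norm p f * t \<le> (real N * t) * Lp_norm p (fdiff (t *\<^sub>R \<xi>) f)"
    using t by (simp add: mult_right_mono algebra_simps)
  also have "\<dots> \<le> 2 * w * Lp_norm p (fdiff (t *\<^sub>R \<xi>) f)"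
    using N by (intro mult_right_mono) (auto simp: Lp_norm_def)
  finally show ?thesis
    by (simp add: w_def)
qed

lemma nn_integral_powr_Ioo:
  fixes a w B :: real
  assumes "0 < a" "0 < w" "0 \<le> B"
  shows "(\<integral>\<^sup>+ t\<in>{0<..<w}. ennreal (B * t powr (a - 1)) \<partial>lborel) = ennreal (B * (w powr a / a))"
proof -
  have "((\<lambda>t. t powr (a - 1)) has_integral (w powr (a - 1 + 1) / (a - 1 + 1))) {0..w}"
    by (rule has_integral_powr_from_0) (use assms in auto)
  then have "((\<lambda>t. t powr (a - 1)) has_integral (w powr a / a)) {0<..<w}"
    by (simp add: has_integral_Icc_iff_Ioo)
  then have "((\<lambda>t. B * t powr (a - 1)) has_integral (B * (w powr a / a))) {0<..<w}"
    by (rule has_integral_mult_right)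
  then have "(\<integral>\<^sup>+ t. ennreal (indicator {0<..<w} t * (B * t powr (a - 1))) \<partial>lborel)
      = ennreal (B * (w powr a / a))"
    by (rule nn_integral_has_integral_lebesgue[rotated]) (use assms in auto)
  then show ?thesis
    by (simp add: indicator_mult_ennreal mult.commute)
qed

lemma nn_integral_weighted_powr_ge:
  fixes g :: "real \<Rightarrow> real"
  assumes "0 < w" "0 \<le> A" "0 < q" "s < 1"
    and g: "\<And>t. 0 < t \<Longrightarrow> t < w \<Longrightarrow> A * t \<le> g t"
  shows "ennreal (A powr q * (w powr (q * (1 - s)) / (q * (1 - s))))
    \<le> (\<integral>\<^sup>+ t\<in>{0<..<w}. ennreal (t powr (- s * q) * g t powr q / t) \<partial>lborel)"
proof -
  have "A powr q * t powr (q * (1 - s) - 1) \<le> t powr (- s * q) * g t powr q / t"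
    if t: "0 < t" "t < w" for t
  proof -
    have "t powr (q * (1 - s) - 1) = t powr (- s * q + q) / t powr 1"
      by (subst powr_diff[symmetric]) (simp add: algebra_simps)
    also have "t powr (- s * q + q) = t powr (- s * q) * t powr q"
      by (rule powr_add)
    finally have "t powr (q * (1 - s) - 1) = t powr (- s * q) * t powr q / t"
      using t by simp
    then have "A powr q * t powr (q * (1 - s) - 1) = t powr (- s * q) * (A * t) powr q / t"
      using t assms by (simp add: powr_mult)
    also have "\<dots> \<le> t powr (- s * q) * g t powr q / t"
      using t assms g[OF t]
      by (intro divide_right_mono mult_left_mono powr_mono2) auto
    finally show ?thesis .
  qed
  then have "(\<integral>\<^sup>+ t\<in>{0<..<w}. ennreal (A powr q * t powr (q * (1 - s) - 1)) \<partial>lborel)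
      \<le> (\<integral>\<^sup>+ t\<in>{0<..<w}. ennreal (t powr (- s * q) * g t powr q / t) \<partial>lborel)"
    by (intro nn_integral_mono) (auto simp: indicator_def ennreal_leI)
  then show ?thesis
    using assms by (simp add: nn_integral_powr_Ioo)
qed

lemma Lp_norm_zero:
  assumes "\<And>x. f x = 0"
  shows "Lp_norm p f = 0"
  using assms by (simp add: Lp_norm_def)

lemma Lp_norm_le_fdiff_integral:
  fixes \<Omega> :: "'a::euclidean_space set" and f :: "'a \<Rightarrow> real"
  assumes \<Omega>: "bounded \<Omega>" "open \<Omega>" and s: "s < 1" and p: "1 \<le> p" and q: "0 < q"
    and "norm \<xi> = 1" and f: "continuous_on UNIV f" "{x. f x \<noteq> 0} \<subseteq> \<Omega>"
    and I: "(\<integral>\<^sup>+ t\<in>{0<..<width \<Omega> \<xi>}.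
              ennreal (t powr (- s * q) * (Lp_norm p (fdiff (t *\<^sub>R \<xi>) f)) powr q / t) \<partial>lborel)
            = ennreal I"
  shows "Lp_norm p f \<le> 2 powr (1 - 1/p) * (q * (1 - s)) powr (1/q) * width \<Omega> \<xi> powr s * I powr (1/q)"
proof (cases "\<forall>x. f x = 0")
  case True
  then show ?thesis
    by (simp add: Lp_norm_zero)
next
  case False
  then obtain x0 where "f x0 \<noteq> 0" by blast
  define w where "w = width \<Omega> \<xi>"
  define F where "F = Lp_norm p f"
  define A where "A = 2 powr (1/p) * F / (2 * w)"
  define a where "a = q * (1 - s)"
  define V where "V = A powr q * (w powr a / a)"
  have w: "0 < w"
    using \<open>f x0 \<noteq> 0\<close> f(2) \<Omega> \<open>norm \<xi> = 1\<close> unfolding w_def by (intro width_pos) auto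
  have "0 \<le> F" "0 < a"
    using q s by (simp_all add: F_def Lp_norm_def a_def)
  then have "0 \<le> A" "0 \<le> V"
    using w by (simp_all add: A_def V_def)
  have "A * t \<le> Lp_norm p (fdiff (t *\<^sub>R \<xi>) f)" if "0 < t" "t < w" for t
    using Lp_norm_fdiff_lower_bound[OF f \<Omega>(1) \<open>norm \<xi> = 1\<close> p that[unfolded w_def]] w
    by (simp add: A_def F_def w_def field_simps)
  then have "ennreal V
      \<le> (\<integral>\<^sup>+ t\<in>{0<..<w}. ennreal (t powr (- s * q) * (Lp_norm p (fdiff (t *\<^sub>R \<xi>) f)) powr q / t) \<partial>lborel)"
    unfolding V_def a_def by (rule nn_integral_weighted_powr_ge[OF w \<open>0 \<le> A\<close> q s])
  then have "ennreal V \<le> ennreal I"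
    using I by (simp add: w_def)
  \<comment> \<open>\<open>ennreal\<close> maps a negative \<open>I\<close> to \<open>0\<close>, which forces \<open>V = 0\<close>.\<close>
  then have "V powr (1/q) \<le> I powr (1/q)"
    using \<open>0 \<le> V\<close> q by (cases "V = 0") (auto simp: ennreal_le_iff2 intro: powr_mono2)
  moreover have "F = 2 powr (1 - 1/p) * a powr (1/q) * w powr s * V powr (1/q)"
  proof -
    have "V powr (1/q) = A * w powr (1 - s) / a powr (1/q)"
      using \<open>0 \<le> A\<close> \<open>0 < a\<close> w q
      by (simp add: V_def powr_mult powr_divide powr_powr a_def)
    then have "2 powr (1 - 1/p) * a powr (1/q) * w powr s * V powr (1/q)
        = 2 powr (1 - 1/p) * A * (w powr s * w powr (1 - s))"
      using \<open>0 < a\<close> by simp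
    also have "\<dots> = (2 powr (1 - 1/p) * 2 powr (1/p)) * F / 2"
      using w by (simp add: A_def flip: powr_add)
    also have "\<dots> = F"
      by (simp flip: powr_add)
    finally show ?thesis ..
  qed
  ultimately show ?thesis
    unfolding F_def a_def w_def by (simp add: mult_left_mono)
qed

lemma two_powr_mult_le_c_const_expr:
  assumes "1 \<le> p" "1 \<le> q" "0 < s" "s < 1"
  shows "2 powr (1 - 1/p) * q powr (1/q)
    \<le> (9 / c_const p) * (q / (s * q + 1)) powr (1/q) * max 1 (c_const p / 3) powr (1 - s)"
proof -
  define c where "c = c_const p"
  define S where "S = (s * q + 1) powr (1/q)"
  have c: "0 < c"
    using assms by (simp add: c_def c_const_pos)
  have "S \<le> (1/q) * (s * q + 1) + (1 - 1/q)"
    unfolding S_def using assms by (intro powr_weighted_am_gm) auto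
  also have "\<dots> = s + 1"
    using assms by (simp add: field_simps)
  finally have "S \<le> 2"
    using assms by simp
  have "0 < s * q + 1"
    using assms by (simp add: add_pos_pos)
  then have "0 < S"
    by (simp add: S_def)
  have "c * 2 powr (1 - 1/p) * 2 \<le> 9"
  proof -
    have "c * 2 powr (1 - 1/p) * 2 * 2 powr (1/p) = 4 * c"
      by (simp flip: powr_add)
    also have "\<dots> \<le> 9 * 2 powr (1/p)"
      unfolding c_def by (rule c_const_le[OF assms(1)])
    finally show ?thesis
      by simp
  qed
  moreover have "c * 2 powr (1 - 1/p) * S \<le> c * 2 powr (1 - 1/p) * 2"
    using \<open>S \<le> 2\<close> c by (intro mult_left_mono) auto
  moreover have "1 \<le> max 1 (c / 3) powr (1 - s)"
    using assms by (simp add: ge_one_powr_ge_zero)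
  ultimately have "2 powr (1 - 1/p) * (c * S) \<le> 9 * max 1 (c / 3) powr (1 - s)"
    by (simp add: ac_simps)
  then have "2 powr (1 - 1/p) \<le> 9 * max 1 (c / 3) powr (1 - s) / (c * S)"
    using c \<open>0 < S\<close> by (simp add: pos_le_divide_eq)
  then have "2 powr (1 - 1/p) * q powr (1/q) \<le> 9 * max 1 (c / 3) powr (1 - s) / (c * S) * q powr (1/q)"
    by (rule mult_right_mono) simp
  also have "\<dots> = (9 / c) * (q powr (1/q) / S) * max 1 (c / 3) powr (1 - s)"
    by simp
  also have "q powr (1/q) / S = (q / (s * q + 1)) powr (1/q)"
    using assms \<open>0 < s * q + 1\<close> by (simp add: S_def powr_divide)
  finally show ?thesis
    by (simp add: c_def)
qed

lemma continuous_on_if_C1_on_UNIV: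
  assumes "C1_on_UNIV f"
  shows "continuous_on UNIV f"
  using assms has_derivative_continuous
  unfolding C1_on_UNIV_def by (blast intro: continuous_at_imp_continuous_on)

theorem mainTheorem18:
  fixes \<Omega> :: "'n::euclidean_space set" and s p q :: real
    and \<xi> :: 'n and f :: "'n \<Rightarrow> real"
  assumes "bounded \<Omega>" and "open \<Omega>"
    and "0 < s" and "s < 1" and "1 \<le> p" and "1 \<le> q"
    and "norm \<xi> = 1"
    and "C1_on_UNIV f"
    and "closure {x. f x \<noteq> 0} \<subseteq> \<Omega>"
  shows "\<forall>I. (\<integral>\<^sup>+ t\<in>{0<..<width \<Omega> \<xi>}.
                 ennreal (t powr (- s * q) * (Lp_norm p (fdiff (t *\<^sub>R \<xi>) f)) powr q / t) \<partial>lborel)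
             = ennreal I \<longrightarrow>
           Lp_norm p f \<le>
             (9 / c_const p) * (q / (s * q + 1)) powr (1 / q) * (max 1 (c_const p / 3)) powr (1 - s)
             * (1 - s) powr (1 / q) * (width \<Omega> \<xi>) powr s * I powr (1 / q)"
proof (intro allI impI)
  fix I
  assume I: "(\<integral>\<^sup>+ t\<in>{0<..<width \<Omega> \<xi>}.
               ennreal (t powr (- s * q) * (Lp_norm p (fdiff (t *\<^sub>R \<xi>) f)) powr q / t) \<partial>lborel)
             = ennreal I"
  define R where "R = (1 - s) powr (1/q) * width \<Omega> \<xi> powr s * I powr (1/q)"
  have "{x. f x \<noteq> 0} \<subseteq> \<Omega>"
    using closure_subset assms(9) by (rule order_trans)
  then have "Lp_norm p f \<le> 2 powr (1 - 1/p) * (q * (1 - s)) powr (1/q) * width \<Omega> \<xi> powr s * I powr (1/q)"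
    using assms I by (intro Lp_norm_le_fdiff_integral continuous_on_if_C1_on_UNIV) auto
  also have "\<dots> = (2 powr (1 - 1/p) * q powr (1/q)) * R"
    using assms by (simp add: R_def powr_mult)
  also have "\<dots> \<le> ((9 / c_const p) * (q / (s * q + 1)) powr (1/q) * max 1 (c_const p / 3) powr (1 - s)) * R"
    by (intro mult_right_mono two_powr_mult_le_c_const_expr) (use assms in \<open>auto simp: R_def\<close>)
  finally show "Lp_norm p f \<le> (9 / c_const p) * (q / (s * q + 1)) powr (1 / q)
      * (max 1 (c_const p / 3)) powr (1 - s) * (1 - s) powr (1 / q) * (width \<Omega> \<xi>) powr s * I powr (1 / q)"
    by (simp add: R_def ac_simps)
qed

end
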